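(* Let $\mathcal{G}$ be a multi-layer graph with $l$ layers, $d,k\in\mathbb{N}$ with $k\ge1$, and $\mathcal{R}$ a collection of exactly $k$ subsets of $V(\mathcal{G})$. Let $L\subseteq\{1,\dots,l\}$. If $C^d_L(\mathcal{G})$ does not satisfy $|\mathsf{Cov}((\mathcal{R}-\{C^*(\mathcal{R})\})\cup\{C^d_L(\mathcal{G})\})|\ge(1+\frac1k)|\mathsf{Cov}(\mathcal{R})|$, then no descendant $C^d_{L'}(\mathcal{G})$ of $C^d_L(\mathcal{G})$ satisfies $|\mathsf{Cov}((\mathcal{R}-\{C^*(\mathcal{R})\})\cup\{C^d_{L'}(\mathcal{G})\})|\ge(1+\frac1k)|\mathsf{Cov}(\mathcal{R})|$.
   Context: A multi-layer graph $\mathcal{G}=(V,E_1,\dots,E_l)$ consists of a finite vertex set $V$ and edge sets $E_i$ of simple undirected graphs $G_i=(V,E_i)$. A graph is $d$-dense if every vertex has degree at least $d$; the $d$-coherent core $C^d_L(\mathcal{G})$ is the unique maximal $S\subseteq V$ such that the induced subgraph $G_i[S]$ is $d$-dense for all $i\in L$ (with $C^d_\emptyset(\mathcal{G})=V$). For a collection $\mathcal{R}$ of sets, $\mathsf{Cov}(\mathcal{R})=\bigcup_{R\in\mathcal{R}}R$; for $C'\in\mathcal{R}$, $\Delta(\mathcal{R},C')=C'-\mathsf{Cov}(\mathcal{R}-\{C'\})$; $C^*(\mathcal{R})$ is a fixed element of $\mathcal{R}$ minimizing $|\Delta(\mathcal{R},C')|$. Bottom-up search tree: $C^d_L(\mathcal{G})$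 is the parent of $C^d_{L'}(\mathcal{G})$ if $L'=L\cup\{\ell\}$ with $\ell>\max(L)$ ($\max(\emptyset)=-\infty$); descendants are obtained by iterating the child relation, i.e., $L'\supsetneq L$ with every element of $L'-L$ larger than $\max(L)$. *)

theory Defs
  imports Complex_Main
begin

definition multilayer_graph :: "'a set \<Rightarrow> nat \<Rightarrow> (nat \<Rightarrow> 'a set set) \<Rightarrow> bool" where
  "multilayer_graph V l E \<longleftrightarrow> finite V \<and>
     (\<forall>i\<in>{1..l}. \<forall>e\<in>E i. e \<subseteq> V \<and> card e = 2)"

definition ind_degree :: "(nat \<Rightarrow> 'a set set) \<Rightarrow> nat \<Rightarrow> 'a set \<Rightarrow> 'a \<Rightarrow> nat" where
  "ind_degree E i S v = card {u \<in> S. {v, u} \<in> E i}"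

definition dense_in :: "(nat \<Rightarrow> 'a set set) \<Rightarrow> nat \<Rightarrow> nat \<Rightarrow> 'a set \<Rightarrow> bool" where
  "dense_in E i d S \<longleftrightarrow> (\<forall>v\<in>S. ind_degree E i S v \<ge> d)"

definition coherent_core :: "'a set \<Rightarrow> (nat \<Rightarrow> 'a set set) \<Rightarrow> nat \<Rightarrow> nat set \<Rightarrow> 'a set" where
  "coherent_core V E d L =
     (THE S. S \<subseteq> V \<and> (\<forall>i\<in>L. dense_in E i d S) \<and>
        (\<forall>T. T \<subseteq> V \<and> (\<forall>i\<in>L. dense_in E i d T) \<longrightarrow> T \<subseteq> S))"

definition Cov :: "'a set set \<Rightarrow> 'a set" where
  "Cov R = \<Union>R"

definition Delta :: "'a set set \<Rightarrow> 'a set \<Rightarrow> 'a set" where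
  "Delta R C' = C' - Cov (R - {C'})"

(* L' is a descendant of L in the bottom-up search tree (max {} = -infinity) *)
definition descendant :: "nat set \<Rightarrow> nat set \<Rightarrow> bool" where
  "descendant L L' \<longleftrightarrow> L \<subset> L' \<and> (\<forall>x\<in>L' - L. \<forall>y\<in>L. y < x)"

end

theory Submission
  imports Defs
begin

(* Descendants L' of L satisfy L \<subseteq> L', and the coherent core is antitone in the
   set of layers, being the union of all vertex sets that are d-dense in those
   layers. So C^d_{L'} \<subseteq> C^d_L, the cover obtained by swapping in C^d_{L'} is
   contained in the one obtained by swapping in C^d_L, and the size bound that
   fails for L fails a fortiori for L'. *)

lemma ind_degree_mono:
  assumes "finite T" "S \<subseteq> T"
  shows "ind_degree E i S v \<le> ind_degree E i T v"
  unfolding ind_degree_def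
  by (rule card_mono) (use assms in \<open>auto intro: finite_subset\<close>)

lemma dense_in_Union:
  assumes "finite (\<Union>\<S>)" "\<forall>S\<in>\<S>. dense_in E i d S"
  shows "dense_in E i d (\<Union>\<S>)"
  unfolding dense_in_def
proof
  fix v assume "v \<in> \<Union>\<S>"
  then obtain S where S: "S \<in> \<S>" "v \<in> S" by blast
  have "d \<le> ind_degree E i S v" using S assms(2) unfolding dense_in_def by blast
  also have "\<dots> \<le> ind_degree E i (\<Union>\<S>) v"
    using S(1) assms(1) by (intro ind_degree_mono) auto
  finally show "d \<le> ind_degree E i (\<Union>\<S>) v" .
qed

lemma coherent_core_eq_Union:
  assumes "finite V"
  shows "coherent_core V E d L = \<Union>{S. S \<subseteq> V \<and> (\<forall>i\<in>L. dense_in E i d S)}"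
    (is "_ = \<Union>?\<S>")
proof -
  have sub: "\<Union>?\<S> \<subseteq> V" by blast
  with assms have "\<forall>i\<in>L. dense_in E i d (\<Union>?\<S>)"
    by (intro ballI dense_in_Union) (auto intro: finite_subset)
  with sub show ?thesis
    unfolding coherent_core_def by (intro the_equality) blast+
qed

lemma coherent_core_subset:
  "finite V \<Longrightarrow> coherent_core V E d L \<subseteq> V"
  by (auto simp: coherent_core_eq_Union)

lemma coherent_core_antimono:
  "finite V \<Longrightarrow> L \<subseteq> L' \<Longrightarrow> coherent_core V E d L' \<subseteq> coherent_core V E d L"
  by (simp add: coherent_core_eq_Union) blast

lemma card_Cov_insert_mono:
  assumes "finite (Cov (insert C \<R>))" "C' \<subseteq> C"
  shows "card (Cov (insert C' \<R>)) \<le> card (Cov (insert C \<R>))"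
  using assms by (intro card_mono) (auto simp: Cov_def)

theorem lemma2:
  fixes V :: "'a set" and l :: nat and E :: "nat \<Rightarrow> 'a set set"
    and d k :: nat and R :: "'a set set" and Cstar :: "'a set" and L :: "nat set"
  assumes G: "multilayer_graph V l E"
    and k: "k \<ge> 1"
    and R: "finite R" "card R = k" "\<forall>C\<in>R. C \<subseteq> V"
    and Cstar: "Cstar \<in> R" "\<forall>C'\<in>R. card (Delta R Cstar) \<le> card (Delta R C')"
    and L: "L \<subseteq> {1..l}"
    and notL: "\<not> (real (card (Cov ((R - {Cstar}) \<union> {coherent_core V E d L})))
                  \<ge> (1 + 1 / real k) * real (card (Cov R)))"
  shows "\<forall>L'. L' \<subseteq> {1..l} \<and> descendant L L' \<longrightarrow>
           \<not> (real (card (Cov ((R - {Cstar}) \<union> {coherent_core V E d L'})))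
                  \<ge> (1 + 1 / real k) * real (card (Cov R)))"
proof (intro allI impI)
  fix L' assume "L' \<subseteq> {1..l} \<and> descendant L L'"
  then have "L \<subseteq> L'" unfolding descendant_def by blast
  have fin: "finite V" using G unfolding multilayer_graph_def by blast
  have "Cov (insert (coherent_core V E d L) (R - {Cstar})) \<subseteq> V"
    using R(3) coherent_core_subset[OF fin] unfolding Cov_def by blast
  then have "card (Cov (insert (coherent_core V E d L') (R - {Cstar})))
      \<le> card (Cov (insert (coherent_core V E d L) (R - {Cstar})))"
    using fin \<open>L \<subseteq> L'\<close>
    by (intro card_Cov_insert_mono coherent_core_antimono) (auto intro: finite_subset)
  then show "\<not> (real (card (Cov ((R - {Cstar}) \<union> {coherent_core V E d L'})))
                  \<ge> (1 + 1 / real k) * real (card (Cov R)))"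
    using notL by simp
qed

end
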